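(* Let $f,g:\mathbb R\to\mathbb R_{+\infty}$ be $\mathcal H$-convex with $\operatorname{dom} f\cap\operatorname{dom} g\ne\emptyset$. Then $\operatorname{cl}(\operatorname{supp} f+\operatorname{supp} g)$ is $\mathcal H$-convex, and $$\operatorname{supp}(f+g)=\operatorname{cl}(\operatorname{supp} f+\operatorname{supp} g).$$ Equivalently, $\operatorname{cl}(\operatorname{epi} f^*+\operatorname{epi} g^* )=\operatorname{epi}(f+g)^*$ in $\mathcal L\times\mathbb R$.
   Context: $X=\mathbb R$; $\mathbb R_{+\infty}=\mathbb R\cup\{+\infty\}$. For $a,b\in\mathbb R$, $\phi_a(x)=ax^2$, $\psi_{a,b}(x)=ax^2+b$; $\mathcal L=\{\phi_a:a\in\mathbb R\}$, $\mathcal H=\{\psi_{a,b}:a,b\in\mathbb R\}$, both with the pointwise convergence topology (under which $\phi_a\mapsto a$ and $\psi_{a,b}\mapsto(a,b)$ are homeomorphisms onto $\mathbb R$ and $\mathbb R^2$); $\mathcal L\times\mathbb R$ has the product topology; $\operatorname{cl}$ is closure. $\operatorname{dom} f=\{x:f(x)<+\infty\}$; $\operatorname{supp} f=\{h\in\mathcal H:h\le f\}$; $f$ is $\mathcal H$-convex if $f=\sup_{h\in H}h$ for some $H\subset\mathcal H$; a set $C\subset\mathcal H$ is $\mathcal H$-convex if for every $h_0\in\mathcal H\setminus C$ there is $x$ with $h_0(x)>\sup_{h\in C}h(x)$. $f^*(\phi_a)=\sup_x(ax^2-f(x))$ and $\operatorname{epi} f^*=\{(l,r)\in\mathcal L\times\mathbb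 R:f^*(l)\le r\}$. Sums of sets are Minkowski sums. *)

theory Defs
  imports "HOL-Analysis.Analysis"
begin

text \<open>Elements of H are psi_{a,b}(x) = a x^2 + b; we identify psi_{a,b} with the
parameter pair (a,b) :: real \<times> real (a homeomorphism for the pointwise topology).
Functions R -> R_{+\<infinity>} are modelled as real \<Rightarrow> ereal never taking the value -\<infinity>.\<close>

definition psi :: "real \<times> real \<Rightarrow> real \<Rightarrow> real" where
  "psi h x = fst h * x\<^sup>2 + snd h"

definition H_convex_fun :: "(real \<Rightarrow> ereal) \<Rightarrow> bool" where
  "H_convex_fun f \<longleftrightarrow> (\<exists>H :: (real \<times> real) set. f = (\<lambda>x. SUP h\<in>H. ereal (psi h x)))"

definition supp :: "(real \<Rightarrow> ereal) \<Rightarrow> (real \<times> real) set" where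
  "supp f = {h. \<forall>x. ereal (psi h x) \<le> f x}"

definition H_convex_set :: "(real \<times> real) set \<Rightarrow> bool" where
  "H_convex_set C \<longleftrightarrow>
     (\<forall>h0. h0 \<notin> C \<longrightarrow> (\<exists>x. ereal (psi h0 x) > (SUP h\<in>C. ereal (psi h x))))"

definition dom :: "(real \<Rightarrow> ereal) \<Rightarrow> real set" where
  "dom f = {x. f x < \<infinity>}"

definition msum :: "(real \<times> real) set \<Rightarrow> (real \<times> real) set \<Rightarrow> (real \<times> real) set" where
  "msum A B = {p + q | p q. p \<in> A \<and> q \<in> B}"

end

theory Submission
  imports Defs
begin

text \<open>Since \<open>psi h x = (x\<^sup>2, 1) \<bullet> h\<close>, each constraint \<open>psi h x \<le> F x\<close> is a closed half-plane in the
parameter plane, so \<open>supp F\<close> is closed and convex; it is also stable under decreasing both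
parameters. Clearly \<open>supp f + supp g \<subseteq> supp (f + g)\<close>. Conversely, a point \<open>h\<^sub>0\<close> outside the closure
of \<open>supp f + supp g\<close> is strictly separated from it by a line \<open>u a + v b = k\<close>; the downward stability
forces \<open>u, v \<ge> 0\<close>, and adding a small multiple of the constraint at a point \<open>x\<^sub>0\<close> of
\<open>dom f \<inter> dom g\<close> makes \<open>v > 0\<close>. Dividing by \<open>v\<close>, the separating functional becomes evaluation of
\<open>psi\<close> at \<open>x = sqrt (u / v)\<close>, which shows \<open>f x + g x < psi h\<^sub>0 x\<close>, i.e. \<open>h\<^sub>0 \<notin> supp (f + g)\<close>.
Finally every set of the form \<open>supp F\<close> is \<open>\<H>\<close>-convex.\<close>

lemma psi_eq_inner: "psi h x = inner (x\<^sup>2, 1) h"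
  by (cases h) (simp add: psi_def)

lemma psi_add: "psi (p + q) x = psi p x + psi q x"
  by (simp add: psi_def algebra_simps)

lemma psi_diff_le:
  assumes "s \<ge> 0" "r \<ge> 0"
  shows "psi (h - (s, r)) x \<le> psi h x"
  using assms by (simp add: psi_def algebra_simps)

lemma msum_add_mem: "p \<in> A \<Longrightarrow> q \<in> B \<Longrightarrow> p + q \<in> msum A B"
  unfolding msum_def by blast

lemma msum_eq_UN: "msum A B = (\<Union>p\<in>A. \<Union>q\<in>B. {p + q})"
  unfolding msum_def by blast

lemma supp_eq_INT: "supp F = (\<Inter>x. {h. ereal (inner (x\<^sup>2, 1) h) \<le> F x})"
  unfolding supp_def psi_eq_inner by blast

lemma closed_convex_ereal_halfspace:
  "closed {h. ereal (inner c h) \<le> t} \<and> convex {h. ereal (inner c h) \<le> t}"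
  by (cases t) (auto simp: closed_halfspace_le convex_halfspace_le)

lemma closed_supp: "closed (supp F)"
  unfolding supp_eq_INT using closed_convex_ereal_halfspace by (auto intro!: closed_INT)

lemma convex_supp: "convex (supp F)"
  unfolding supp_eq_INT using closed_convex_ereal_halfspace by (auto intro!: convex_INT)

lemma supp_diff:
  assumes "h \<in> supp F" "s \<ge> 0" "r \<ge> 0"
  shows "h - (s, r) \<in> supp F"
  unfolding supp_def
proof (intro CollectI allI)
  fix x
  have "ereal (psi (h - (s, r)) x) \<le> ereal (psi h x)" using psi_diff_le assms(2,3) by simp
  also have "\<dots> \<le> F x" using assms(1) by (simp add: supp_def)
  finally show "ereal (psi (h - (s, r)) x) \<le> F x" .
qed

lemma H_convex_set_supp: "H_convex_set (supp F)"
  unfolding H_convex_set_def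
proof (intro allI impI)
  fix h0 assume "h0 \<notin> supp F"
  then obtain x where x: "F x < ereal (psi h0 x)" unfolding supp_def by (auto simp: not_le)
  have "(SUP h\<in>supp F. ereal (psi h x)) \<le> F x"
    by (rule SUP_least) (simp add: supp_def)
  with x show "\<exists>x. (SUP h\<in>supp F. ereal (psi h x)) < ereal (psi h0 x)"
    by (blast intro: le_less_trans)
qed

lemma msum_supp_subset_supp_add: "msum (supp f) (supp g) \<subseteq> supp (\<lambda>x. f x + g x)"
proof
  fix h assume "h \<in> msum (supp f) (supp g)"
  then obtain p q where "h = p + q" "p \<in> supp f" "q \<in> supp g" unfolding msum_def by blast
  then show "h \<in> supp (\<lambda>x. f x + g x)"
    unfolding supp_def by (simp add: psi_add add_mono flip: plus_ereal.simps(1))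
qed

lemma H_convex_fun_eq_SUP_supp:
  assumes "H_convex_fun f"
  shows "f x = (SUP h\<in>supp f. ereal (psi h x))"
proof -
  obtain H where H: "f = (\<lambda>x. SUP h\<in>H. ereal (psi h x))"
    using assms unfolding H_convex_fun_def by blast
  then have "H \<subseteq> supp f" unfolding supp_def by (auto intro: SUP_upper)
  then have "f x \<le> (SUP h\<in>supp f. ereal (psi h x))" unfolding H by (rule SUP_subset_mono) simp
  moreover have "(SUP h\<in>supp f. ereal (psi h x)) \<le> f x" by (rule SUP_least) (simp add: supp_def)
  ultimately show ?thesis by (rule antisym)
qed

lemma supp_nonempty:
  assumes "H_convex_fun f" "f x \<noteq> -\<infinity>"
  shows "supp f \<noteq> {}"
  using assms H_convex_fun_eq_SUP_supp[OF assms(1), of x] by (auto simp: bot_ereal_def)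

lemma SUP_ereal_add_SUP:
  fixes a b :: "'a \<Rightarrow> real"
  assumes "A \<noteq> {}" "B \<noteq> {}"
  shows "(SUP p\<in>A. ereal (a p)) + (SUP q\<in>B. ereal (b q)) = (SUP p\<in>A. SUP q\<in>B. ereal (a p + b q))"
proof -
  have "(SUP q\<in>B. ereal (b q)) \<noteq> -\<infinity>"
    using assms(2) by (auto simp: Sup_eq_MInfty)
  from SUP_ereal_add_left[OF assms(1) this] have "(SUP p\<in>A. ereal (a p)) + (SUP q\<in>B. ereal (b q))
      = (SUP p\<in>A. ereal (a p) + (SUP q\<in>B. ereal (b q)))"
    by simp
  also have "\<dots> = (SUP p\<in>A. SUP q\<in>B. ereal (a p) + ereal (b q))"
    by (rule SUP_cong[OF refl], rule SUP_ereal_add_right[symmetric]) (use assms(2) in auto)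
  finally show ?thesis by simp
qed

lemma H_convex_fun_add_le:
  assumes "H_convex_fun f" "H_convex_fun g" "f x \<noteq> -\<infinity>" "g x \<noteq> -\<infinity>"
    and "\<And>h. h \<in> msum (supp f) (supp g) \<Longrightarrow> psi h x \<le> c"
  shows "f x + g x \<le> ereal c"
proof -
  have "f x + g x = (SUP p\<in>supp f. SUP q\<in>supp g. ereal (psi p x + psi q x))"
    unfolding H_convex_fun_eq_SUP_supp[OF assms(1), of x] H_convex_fun_eq_SUP_supp[OF assms(2), of x]
    by (rule SUP_ereal_add_SUP[OF supp_nonempty[OF assms(1,3)] supp_nonempty[OF assms(2,4)]])
  also have "\<dots> \<le> ereal c"
  proof (intro SUP_least)
    fix p q assume "p \<in> supp f" "q \<in> supp g"
    then have "p + q \<in> msum (supp f) (supp g)" by (rule msum_add_mem)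
    then show "ereal (psi p x + psi q x) \<le> ereal c" using assms(5) by (simp flip: psi_add)
  qed
  finally show ?thesis .
qed

definition downward_closed :: "(real \<times> real) set \<Rightarrow> bool" where
  "downward_closed C \<longleftrightarrow> (\<forall>h\<in>C. \<forall>s r. s \<ge> 0 \<longrightarrow> r \<ge> 0 \<longrightarrow> h - (s, r) \<in> C)"

lemma downward_closed_supp: "downward_closed (supp F)"
  unfolding downward_closed_def by (auto intro: supp_diff)

lemma downward_closed_msum:
  assumes "downward_closed A"
  shows "downward_closed (msum A B)"
  unfolding downward_closed_def msum_def
proof (intro ballI allI impI)
  fix h and s r :: real
  assume "h \<in> {p + q |p q. p \<in> A \<and> q \<in> B}" "0 \<le> s" "0 \<le> r"
  then obtain p q where "h = p + q" "p - (s, r) \<in> A" "q \<in> B"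
    using assms(1) unfolding downward_closed_def by blast
  then show "h - (s, r) \<in> {p + q |p q. p \<in> A \<and> q \<in> B}"
    by (intro CollectI exI[of _ "p - (s, r)"] exI[of _ q]) simp
qed

lemma nonpos_if_bounded_on_nonneg:
  fixes a b :: real
  assumes "\<And>s. s \<ge> 0 \<Longrightarrow> a * s < b"
  shows "a \<le> 0"
proof (rule ccontr)
  assume "\<not> a \<le> 0"
  then have "a * (\<bar>b\<bar> / a) = \<bar>b\<bar>" by simp
  with assms[of "\<bar>b\<bar> / a"] \<open>\<not> a \<le> 0\<close> show False by simp
qed

lemma downward_closed_separation:
  assumes "convex C" "C \<noteq> {}" "downward_closed C" "h0 \<notin> closure C"
  obtains u v k where "u \<ge> 0" "v \<ge> 0" "\<And>h. h \<in> C \<Longrightarrow> u * fst h + v * snd h < k"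
    "k < u * fst h0 + v * snd h0"
proof -
  obtain w k where w: "inner w h0 < k" "\<And>h. h \<in> closure C \<Longrightarrow> k < inner w h"
    using separating_hyperplane_closed_point[of "closure C" h0] assms(1,4)
    by (auto simp: convex_closure)
  define u where "u = - fst w"
  define v where "v = - snd w"
  have inner_w: "inner w h = - (u * fst h + v * snd h)" for h
    by (cases w, cases h) (simp add: u_def v_def)
  have below: "u * fst h + v * snd h < - k" if "h \<in> C" for h
    using w(2)[of h] that closure_subset inner_w[of h] by fastforce
  obtain m where m: "m \<in> C" using assms(2) by blast
  have "m - (s, 0) \<in> C" "m - (0, s) \<in> C" if "s \<ge> 0" for s
    using assms(3) m that unfolding downward_closed_def by auto
  then have "- u * s < - k - (u * fst m + v * snd m)"
    and "- v * s < - k - (u * fst m + v * snd m)" if "s \<ge> 0" for s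
    using below that by (fastforce simp: algebra_simps)+
  then have "u \<ge> 0" "v \<ge> 0"
    using nonpos_if_bounded_on_nonneg[of "- u"] nonpos_if_bounded_on_nonneg[of "- v"] by auto
  moreover have "- k < u * fst h0 + v * snd h0" using w(1) inner_w[of h0] by simp
  ultimately show thesis using that below by blast
qed

lemma psi_sqrt_ratio:
  assumes "u \<ge> 0" "v > 0"
  shows "psi h (sqrt (u / v)) = (u * fst h + v * snd h) / v"
  using assms by (simp add: psi_def field_simps)

lemma quadratic_separation:
  assumes "convex C" "C \<noteq> {}" "downward_closed C" "h0 \<notin> closure C"
    and bounded: "\<And>h. h \<in> C \<Longrightarrow> psi h x0 \<le> M"
  obtains x c where "\<And>h. h \<in> C \<Longrightarrow> psi h x \<le> c" "c < psi h0 x"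
proof (cases "psi h0 x0 \<le> M")
  case False
  with bounded that show thesis by (meson not_le)
next
  case True
  obtain u v k where uv: "u \<ge> 0" "v \<ge> 0" and below: "\<And>h. h \<in> C \<Longrightarrow> u * fst h + v * snd h < k"
    and above: "k < u * fst h0 + v * snd h0"
    using downward_closed_separation[OF assms(1-4)] by blast
  define \<delta> where "\<delta> = u * fst h0 + v * snd h0 - k"
  define D where "D = M - psi h0 x0"
  define l where "l = \<delta> / (D + 1)"
  have "\<delta> > 0" "D \<ge> 0" using above True by (simp_all add: \<delta>_def D_def)
  then have "l > 0" and lD: "l * D < \<delta>"
    by (simp_all add: l_def field_simps)
  define u' where "u' = u + l * x0\<^sup>2"
  define v' where "v' = v + l"
  have u'v': "u' \<ge> 0" "v' > 0" using uv \<open>l > 0\<close> by (simp_all add: u'_def v'_def)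
  have perturbed: "u' * fst h + v' * snd h = (u * fst h + v * snd h) + l * psi h x0" for h
    by (simp add: u'_def v'_def psi_def algebra_simps)
  show thesis
  proof (rule that[of "sqrt (u' / v')" "(k + l * M) / v'"])
    fix h assume "h \<in> C"
    then have "u' * fst h + v' * snd h \<le> k + l * M"
      using perturbed[of h] below[of h] bounded[of h] \<open>l > 0\<close>
      by (smt (verit, best) mult_left_mono)
    then show "psi h (sqrt (u' / v')) \<le> (k + l * M) / v'"
      using u'v' by (simp add: psi_sqrt_ratio divide_right_mono)
  next
    have "k + l * M < u' * fst h0 + v' * snd h0"
      using perturbed[of h0] lD by (simp add: \<delta>_def D_def algebra_simps)
    then show "(k + l * M) / v' < psi h0 (sqrt (u' / v'))"
      using u'v' by (simp add: psi_sqrt_ratio divide_strict_right_mono)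
  qed
qed

lemma supp_add_subset_closure_msum:
  assumes f: "H_convex_fun f" "\<forall>x. f x \<noteq> -\<infinity>" and g: "H_convex_fun g" "\<forall>x. g x \<noteq> -\<infinity>"
    and "x0 \<in> dom f \<inter> dom g"
  shows "supp (\<lambda>x. f x + g x) \<subseteq> closure (msum (supp f) (supp g))"
proof
  fix h0 assume h0: "h0 \<in> supp (\<lambda>x. f x + g x)"
  show "h0 \<in> closure (msum (supp f) (supp g))"
  proof (rule ccontr)
    assume out: "h0 \<notin> closure (msum (supp f) (supp g))"
    have ne: "supp f \<noteq> {}" "supp g \<noteq> {}" using supp_nonempty f g by blast+
    obtain M where M: "f x0 + g x0 = ereal M"
      using assms(5) f(2) g(2) unfolding dom_def by (cases "f x0"; cases "g x0") auto
    have "psi h x0 \<le> M" if "h \<in> msum (supp f) (supp g)" for h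
    proof -
      have "h \<in> supp (\<lambda>x. f x + g x)" using msum_supp_subset_supp_add that by blast
      then have "ereal (psi h x0) \<le> ereal M" unfolding supp_def M[symmetric] by blast
      then show ?thesis by simp
    qed
    moreover have "convex (msum (supp f) (supp g))"
      unfolding msum_eq_UN by (intro convex_sums convex_supp)
    moreover have "msum (supp f) (supp g) \<noteq> {}" using ne msum_add_mem by blast
    ultimately obtain x c where below: "\<And>h. h \<in> msum (supp f) (supp g) \<Longrightarrow> psi h x \<le> c"
      and above: "c < psi h0 x"
      using quadratic_separation[OF _ _ downward_closed_msum[OF downward_closed_supp] out]
      by blast
    have "f x + g x \<le> ereal c"
      using H_convex_fun_add_le[OF f(1) g(1)] f(2) g(2) below by blast
    moreover have "ereal (psi h0 x) \<le> f x + g x" using h0 unfolding supp_def by simp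
    ultimately show False using above by (meson ereal_less_eq(3) not_le order_trans)
  qed
qed

theorem mainTheorem14:
  fixes f g :: "real \<Rightarrow> ereal"
  assumes "\<forall>x. f x \<noteq> -\<infinity>" and "\<forall>x. g x \<noteq> -\<infinity>"
    and "H_convex_fun f" and "H_convex_fun g"
    and "dom f \<inter> dom g \<noteq> {}"
  shows "H_convex_set (closure (msum (supp f) (supp g)))
       \<and> supp (\<lambda>x. f x + g x) = closure (msum (supp f) (supp g))"
proof -
  obtain x0 where "x0 \<in> dom f \<inter> dom g" using assms(5) by blast
  then have "supp (\<lambda>x. f x + g x) \<subseteq> closure (msum (supp f) (supp g))"
    using supp_add_subset_closure_msum assms(1-4) by blast
  moreover have "closure (msum (supp f) (supp g)) \<subseteq> supp (\<lambda>x. f x + g x)"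
    by (intro closure_minimal msum_supp_subset_supp_add closed_supp)
  ultimately have "supp (\<lambda>x. f x + g x) = closure (msum (supp f) (supp g))" by (rule antisym)
  then show ?thesis using H_convex_set_supp by metis
qed

end
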